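(* Let $\alpha\in(0,1)$, $\beta=1/\alpha$, and $f=f_{M_1}$. Let $(x_n)_{n\ge0}$ be the sequence defined in the context. Then $$x_n=\frac{1}{(\alpha M_0(n)\,n)^{\beta}}+O\Big(\frac{\log n}{n^{1+\beta}}\Big),\qquad\text{where } M_0(n)=\frac1n\sum_{j=1}^nM_1(x_j).$$
   Context: $f_{M_1}(x)=x(1+M_1(x)x^\alpha)$ on $[0,1/2]$, $2x-1$ on $(1/2,1]$, with $M_1(x)=C_0\,2^{-\{c_1^{-1}\log x\}}$ ($\{\cdot\}$ fractional part, $\{x\}=\{-x\}$ for $x<0$), $c_1>0$, and $C_0$ chosen so that $f_{M_1}((1/2)^-)=1$. The discontinuity set in $(0,1/2)$ is $\mathcal C=\{s_\ell=e^{-\ell c_1}:\ell\ge1\}$; at $s_\ell$ the one-sided limits are $f(s_\ell^+)=s_\ell+C_0s_\ell^{1+\alpha}$ and $f(s_\ell^-)=s_\ell+\frac{C_0}2s_\ell^{1+\alpha}$. The sequence $(x_n)$: $x_0=1/2$; given $x_n$, if $x_n\in[f(s_\ell^-),f(s_\ell^+)]$ for some $\ell$ set $x_{n+1}=s_\ell$; otherwise set $x_{n+1}$ to be the unique point of $(0,x_n)$ with $f(x_{n+1})=x_n$. Then $x_n\downarrow0$, $f^k(x_n)\in(0,1/2)$ for $k<n$ and $f^n(x_n)=1/2$ (with one-sided values at discontinuities). Note $M_0(n)\in[C_0/2,C_0]$. *)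

theory Defs
  imports "HOL-Analysis.Analysis" "HOL-Library.Landau_Symbols"
begin

definition M1 :: "real \<Rightarrow> real \<Rightarrow> real \<Rightarrow> real" where
  "M1 c1 C0 x = C0 * 2 powr (- frac (ln x / c1))"

definition fM1 :: "real \<Rightarrow> real \<Rightarrow> real \<Rightarrow> real \<Rightarrow> real" where
  "fM1 \<alpha> c1 C0 x = (if x \<le> 1/2 then x * (1 + M1 c1 C0 x * x powr \<alpha>) else 2 * x - 1)"

text \<open>Discontinuity points s_l = exp(-l c_1), l >= 1.\<close>
definition sdisc :: "real \<Rightarrow> nat \<Rightarrow> real" where
  "sdisc c1 l = exp (- real l * c1)"

text \<open>One-sided limits of f at s_l (as given in the context).\<close>
definition fplus :: "real \<Rightarrow> real \<Rightarrow> real \<Rightarrow> nat \<Rightarrow> real" where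
  "fplus \<alpha> c1 C0 l = sdisc c1 l + C0 * sdisc c1 l powr (1 + \<alpha>)"

definition fminus :: "real \<Rightarrow> real \<Rightarrow> real \<Rightarrow> nat \<Rightarrow> real" where
  "fminus \<alpha> c1 C0 l = sdisc c1 l + C0 / 2 * sdisc c1 l powr (1 + \<alpha>)"

definition xstep :: "real \<Rightarrow> real \<Rightarrow> real \<Rightarrow> real \<Rightarrow> real" where
  "xstep \<alpha> c1 C0 x =
    (if \<exists>l\<ge>1. fminus \<alpha> c1 C0 l \<le> x \<and> x \<le> fplus \<alpha> c1 C0 l
     then sdisc c1 (SOME l. l \<ge> 1 \<and> fminus \<alpha> c1 C0 l \<le> x \<and> x \<le> fplus \<alpha> c1 C0 l)
     else (THE y. 0 < y \<and> y < x \<and> fM1 \<alpha> c1 C0 y = x))"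

primrec xseq :: "real \<Rightarrow> real \<Rightarrow> real \<Rightarrow> nat \<Rightarrow> real" where
  "xseq \<alpha> c1 C0 0 = 1/2"
| "xseq \<alpha> c1 C0 (Suc n) = xstep \<alpha> c1 C0 (xseq \<alpha> c1 C0 n)"

definition M0 :: "real \<Rightarrow> real \<Rightarrow> real \<Rightarrow> nat \<Rightarrow> real" where
  "M0 \<alpha> c1 C0 n = (\<Sum>j=1..n. M1 c1 C0 (xseq \<alpha> c1 C0 j)) / real n"

end

theory Submission
  imports Defs
begin

text \<open>
  Away from the gaps \<open>[f(s\<^sub>l\<^sup>-), f(s\<^sub>l\<^sup>+)]\<close> of its image, every
  \<open>x \<le> 1/2\<close> has exactly one preimage under \<open>f\<close>: between consecutive discontinuities
  \<open>f\<close> is increasing or convex. Hence every backward step has the form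
  \<open>x\<^sub>n = x\<^sub>n\<^sub>+\<^sub>1 + m\<^sub>n x\<^sub>n\<^sub>+\<^sub>1\<^sup>1\<^sup>+\<^sup>\<alpha>\<close> with
  \<open>C0/2 \<le> m\<^sub>n \<le> C0\<close>, and \<open>m\<^sub>n = M1(x\<^sub>n\<^sub>+\<^sub>1)\<close> except at the steps
  that land on a discontinuity; those land on distinct \<open>s\<^sub>l \<ge> x\<^sub>n\<close>, so there are
  only \<open>O(log n)\<close> of them. For \<open>y\<^sub>n = x\<^sub>n\<^sup>-\<^sup>\<alpha>\<close> the increments are
  \<open>\<alpha> m\<^sub>n + O(1/y\<^sub>n\<^sub>+\<^sub>1)\<close> and bounded below, so \<open>y\<^sub>n\<close> grows linearly and,
  summing the harmonic error terms, \<open>y\<^sub>n = \<alpha> n M0(n) + O(log n)\<close>. Finally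
  \<open>x\<^sub>n = y\<^sub>n\<^sup>-\<^sup>\<beta>\<close>, and the mean value theorem for \<open>t \<mapsto> t\<^sup>-\<^sup>\<beta>\<close>
  on \<open>[c n, \<infinity>)\<close> turns the \<open>O(log n)\<close> error into \<open>O(log n / n\<^sup>1\<^sup>+\<^sup>\<beta>)\<close>.
\<close>

lemma M1_bounds:
  assumes "0 < C0"
  shows "C0/2 < M1 c1 C0 x" and "M1 c1 C0 x \<le> C0"
proof -
  have frac: "0 \<le> frac (ln x / c1)" "frac (ln x / c1) < 1" by (auto simp: frac_lt_1)
  have "2 powr (- frac (ln x / c1)) \<le> 2 powr 0" using frac by (intro powr_mono) auto
  then show "M1 c1 C0 x \<le> C0" using assms unfolding M1_def by simp
  have "2 powr (-1) < 2 powr (- frac (ln x / c1))" using frac by (intro powr_less_mono) auto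
  then show "C0/2 < M1 c1 C0 x" using assms unfolding M1_def by (simp add: powr_minus_divide field_simps)
qed

lemma pos_of_fM1_tendsto_1:
  assumes "(fM1 \<alpha> c1 C0 \<longlongrightarrow> 1) (at_left (1/2))"
  shows "0 < C0"
proof (rule ccontr)
  assume "\<not> 0 < C0"
  then have "fM1 \<alpha> c1 C0 x \<le> x" if "0 < x" "x \<le> 1/2" for x
    using that by (simp add: fM1_def M1_def mult_nonpos_nonneg mult_le_cancel_left1)
  moreover have "\<forall>\<^sub>F x in at_left (1/2). x \<in> {0<..<1/2::real}"
    by (rule eventually_at_left_real) simp
  ultimately have "\<forall>\<^sub>F x in at_left (1/2). fM1 \<alpha> c1 C0 x \<le> 1/2"
    by (elim eventually_mono) force
  from tendsto_upperbound[OF assms this] show False by simp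
qed

lemma convex_on_powr_nonpos:
  fixes q :: real
  assumes "q \<le> 0"
  shows "convex_on {0<..} (\<lambda>y. y powr q)"
proof (rule f''_ge0_imp_convex[where f' = "\<lambda>y. q * y powr (q - 1)" and f'' = "\<lambda>y. q * (q - 1) * y powr (q - 2)"])
  show "DERIV (\<lambda>y. y powr q) y :> q * y powr (q - 1)" if "y \<in> {0<..}" for y
    using that by (auto intro!: derivative_eq_intros)
  show "DERIV (\<lambda>y. q * y powr (q - 1)) y :> q * (q - 1) * y powr (q - 2)" if "y \<in> {0<..}" for y
    using that by (auto intro!: derivative_eq_intros simp: algebra_simps)
  show "0 \<le> q * (q - 1) * y powr (q - 2)" for y
    using assms by (intro mult_nonneg_nonneg mult_nonpos_nonpos) auto
qed simp

lemma convex_on_equal_values_le_left: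
  fixes F :: "real \<Rightarrow> real"
  assumes "convex_on {s..y2} F" "s \<le> y1" "y1 < y2" "F y1 = F y2"
  shows "F y1 \<le> F s"
proof -
  define t where "t = (y1 - s) / (y2 - s)"
  have t: "0 \<le> t" "t < 1" using assms(2,3) by (auto simp: t_def)
  have "(1 - t) *\<^sub>R s + t *\<^sub>R y2 = s + t * (y2 - s)" by (simp add: algebra_simps)
  also have "\<dots> = y1" using assms(2,3) by (simp add: t_def)
  finally have "y1 = (1 - t) *\<^sub>R s + t *\<^sub>R y2" ..
  then have "F y1 \<le> (1 - t) * F s + t * F y1"
    using convex_onD[OF assms(1), of t s y2] t assms by simp
  then have "(1 - t) * F y1 \<le> (1 - t) * F s" by (simp add: algebra_simps)
  then show ?thesis using t by simp
qed

lemma one_minus_powr_neg_bounds: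
  fixes a t :: real
  assumes a: "0 < a" and t: "0 \<le> t"
  shows "a * t / (1 + (1 + a) * t) \<le> 1 - (1 + t) powr (- a)"
    and "1 - (1 + t) powr (- a) \<le> a * t"
proof -
  define z where "z = a * ln (1 + t)"
  have exp_z: "(1 + t) powr (- a) = exp (- z)" using t by (simp add: z_def powr_def)
  have "z \<le> a * t" using a t by (simp add: z_def ln_add_one_self_le_self)
  then show "1 - (1 + t) powr (- a) \<le> a * t"
    using exp_ge_add_one_self[of "- z"] by (simp add: exp_z)
  define w where "w = a * t / (1 + t)"
  have "t / (1 + t) \<le> ln (1 + t)"
    using ln_le_minus_one[of "1 / (1 + t)"] t by (simp add: ln_div field_simps)
  then have "a * (t / (1 + t)) \<le> a * ln (1 + t)" using a by (intro mult_left_mono) auto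
  then have "w \<le> z" by (simp add: w_def z_def)
  moreover have "0 \<le> w" using a t by (simp add: w_def)
  \<comment> \<open>\<open>1 - e\<^sup>-\<^sup>z \<ge> z / (1 + z)\<close>, which increases in \<open>z \<ge> w\<close>\<close>
  ultimately have "w / (1 + w) \<le> z / (1 + z)" by (simp add: field_simps)
  moreover have "w / (1 + w) = a * t / (1 + (1 + a) * t)"
  proof -
    have "1 + w = (1 + (1 + a) * t) / (1 + t)" using t by (simp add: w_def field_simps)
    then show ?thesis using t by (simp add: w_def)
  qed
  moreover have "z / (1 + z) \<le> 1 - exp (- z)"
    using exp_ge_add_one_self[of z] \<open>w \<le> z\<close> \<open>0 \<le> w\<close> by (simp add: exp_minus field_simps)
  ultimately have "a * t / (1 + (1 + a) * t) \<le> 1 - exp (- z)" by simp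
  then show "a * t / (1 + (1 + a) * t) \<le> 1 - (1 + t) powr (- a)" by (simp add: exp_z)
qed

lemma powr_neg_lipschitz:
  fixes b c y Y :: real
  assumes b: "0 < b" and c: "0 < c" "c \<le> y" "c \<le> Y"
  shows "\<bar>y powr (- b) - Y powr (- b)\<bar> \<le> b * c powr (- b - 1) * \<bar>y - Y\<bar>"
proof -
  have *: "\<bar>p powr (- b) - q powr (- b)\<bar> \<le> b * c powr (- b - 1) * \<bar>p - q\<bar>"
    if pq: "c \<le> p" "p < q" for p q
  proof -
    have "\<exists>z. p < z \<and> z < q \<and> q powr (- b) - p powr (- b) = (q - p) * (- b * z powr (- b - 1))"
      using pq c by (intro MVT2) (auto intro!: derivative_eq_intros)
    then obtain z where z: "p < z" "z < q" "q powr (- b) - p powr (- b) = (q - p) * (- b * z powr (- b - 1))"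
      by blast
    have "z powr (- b - 1) \<le> c powr (- b - 1)" using z pq c b by (intro powr_mono2') auto
    then have "(q - p) * (b * z powr (- b - 1)) \<le> (q - p) * (b * c powr (- b - 1))"
      using pq b by (intro mult_left_mono) auto
    moreover have "p powr (- b) - q powr (- b) = (q - p) * (b * z powr (- b - 1))"
      using z(3) by (simp add: algebra_simps)
    moreover have "0 \<le> (q - p) * (b * z powr (- b - 1))" using pq b by simp
    ultimately show ?thesis using pq by (simp add: algebra_simps)
  qed
  show ?thesis
    using *[of y Y] *[of Y y] c by (cases y Y rule: linorder_cases) (auto simp: abs_minus_commute)
qed

lemma harm_le_one_plus_ln:
  assumes "1 \<le> n"
  shows "harm n \<le> 1 + ln (real n)"
proof -
  obtain k where k: "n = Suc k" using assms by (cases n) auto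
  have "harm (Suc k) - ln (real (Suc k)) \<le> (harm (Suc 0) - ln (real (Suc 0)) :: real)"
    using decseqD[OF decseq_harm_diff_ln, of 0 k] by simp
  then show ?thesis by (simp add: k harm_altdef)
qed

locale fM1_map =
  fixes \<alpha> c1 C0 :: real
  assumes alpha_pos: "0 < \<alpha>" and c1_pos: "0 < c1" and C0_pos: "0 < C0"
begin

abbreviation f :: "real \<Rightarrow> real" where "f \<equiv> fM1 \<alpha> c1 C0"
abbreviation s :: "nat \<Rightarrow> real" where "s \<equiv> sdisc c1"

definition f_upper :: "real \<Rightarrow> real" where
  "f_upper x = x + C0 * x powr (1 + \<alpha>)"

definition f_lower :: "real \<Rightarrow> real" where
  "f_lower x = x + C0 / 2 * x powr (1 + \<alpha>)"

text \<open>The restriction of \<open>f\<close> to \<open>[s l, s (l - 1))\<close>, where \<open>\<lfloor>ln y / c1\<rfloor> = - l\<close>.\<close>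
definition branch :: "nat \<Rightarrow> real \<Rightarrow> real" where
  "branch l y = y + C0 * 2 powr (- real l - ln y / c1) * y powr (1 + \<alpha>)"

lemma fplus_eq [simp]: "fplus \<alpha> c1 C0 l = f_upper (s l)"
  by (simp add: fplus_def f_upper_def)

lemma fminus_eq [simp]: "fminus \<alpha> c1 C0 l = f_lower (s l)"
  by (simp add: fminus_def f_lower_def)

lemma f_eq: "0 < x \<Longrightarrow> x \<le> 1/2 \<Longrightarrow> f x = x + M1 c1 C0 x * x powr (1 + \<alpha>)"
  by (simp add: fM1_def powr_add algebra_simps)

lemma f_lower_less_f: "0 < x \<Longrightarrow> x \<le> 1/2 \<Longrightarrow> f_lower x < f x"
  using M1_bounds(1)[OF C0_pos, of c1 x] by (simp add: f_eq f_lower_def)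

lemma f_le_f_upper: "0 < x \<Longrightarrow> x \<le> 1/2 \<Longrightarrow> f x \<le> f_upper x"
  using M1_bounds(2)[OF C0_pos, of c1 x] by (simp add: f_eq f_upper_def mult_right_mono)

lemma f_upper_strict_mono: "0 < x \<Longrightarrow> x < y \<Longrightarrow> f_upper x < f_upper y"
  using powr_less_mono2[of "1 + \<alpha>" x y] alpha_pos C0_pos by (simp add: f_upper_def add_strict_mono)

lemma f_upper_le:
  assumes "0 < y" "y \<le> 1"
  shows "f_upper y \<le> (1 + C0) * y"
proof -
  have "C0 * y powr (1 + \<alpha>) \<le> C0 * y"
    using powr_le_one_le[of y "1 + \<alpha>"] assms alpha_pos C0_pos by (intro mult_left_mono) auto
  then show ?thesis by (simp add: f_upper_def algebra_simps)
qed

lemma f_lower_mono: "0 < x \<Longrightarrow> x \<le> y \<Longrightarrow> f_lower x \<le> f_lower y"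
  using powr_mono2[of "1 + \<alpha>" x y] alpha_pos C0_pos by (simp add: f_lower_def add_mono)

lemma less_f_lower: "0 < x \<Longrightarrow> x < f_lower x"
  using C0_pos by (simp add: f_lower_def)

lemma less_f_upper: "0 < x \<Longrightarrow> x < f_upper x"
  using C0_pos by (simp add: f_upper_def)

lemma less_branch: "0 < y \<Longrightarrow> y < branch l y"
  using C0_pos by (simp add: branch_def)

lemma sdisc_pos: "0 < s l"
  by (simp add: sdisc_def)

lemma sdisc_0 [simp]: "s 0 = 1"
  by (simp add: sdisc_def)

lemma ln_sdisc: "ln (s l) = - real l * c1"
  by (simp add: sdisc_def)

lemma sdisc_less_iff: "s l < s m \<longleftrightarrow> m < l"
  using c1_pos by (simp add: sdisc_def)

lemma sdisc_le_iff: "s l \<le> s m \<longleftrightarrow> m \<le> l"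
  using c1_pos by (simp add: sdisc_def)

lemma ex_sdisc_less: "0 < e \<Longrightarrow> \<exists>l\<ge>1. s l < e"
proof -
  assume "0 < e"
  obtain n :: nat where "- ln e < real n * c1" using reals_Archimedean3[OF c1_pos] by blast
  moreover have "- real (Suc n) * c1 = - (real n * c1) - c1" by (simp add: algebra_simps)
  ultimately have "- real (Suc n) * c1 < ln e" using c1_pos by linarith
  then have "s (Suc n) < exp (ln e)" by (simp add: sdisc_def)
  then have "s (Suc n) < e" using \<open>0 < e\<close> by simp
  then show ?thesis by (intro exI[of _ "Suc n"]) simp
qed

lemma sdisc_le_iff_ln: "0 < y \<Longrightarrow> s l \<le> y \<longleftrightarrow> - real l * c1 \<le> ln y"
  using ln_le_cancel_iff[OF sdisc_pos, of y l] by (simp add: ln_sdisc)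

lemma less_sdisc_iff_ln: "0 < y \<Longrightarrow> y < s l \<longleftrightarrow> ln y < - real l * c1"
  using ln_less_cancel_iff[OF _ sdisc_pos, of y l] by (simp add: ln_sdisc)

lemma sdisc_interval:
  assumes "0 < y" "y < 1"
  obtains l where "1 \<le> l" "s l \<le> y" "y < s (l - 1)"
proof
  define k where "k = \<lfloor>ln y / c1\<rfloor>"
  have "ln y / c1 < 0" using assms c1_pos by (simp add: divide_neg_pos)
  then have k: "k < 0" by (simp add: k_def floor_less_iff)
  show "1 \<le> nat (- k)" using k by simp
  have "real_of_int k \<le> ln y / c1" "ln y / c1 < real_of_int k + 1"
    by (simp_all add: k_def)
  then have "real_of_int k * c1 \<le> ln y" "ln y < (real_of_int k + 1) * c1"
    using c1_pos by (simp_all add: pos_le_divide_eq pos_divide_less_eq)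
  then show "s (nat (- k)) \<le> y" "y < s (nat (- k) - 1)"
    using k assms by (simp_all add: sdisc_le_iff_ln less_sdisc_iff_ln of_nat_diff algebra_simps)
qed

lemma f_eq_branch:
  assumes "1 \<le> l" "s l \<le> y" "y < s (l - 1)" "y \<le> 1/2"
  shows "f y = branch l y"
proof -
  have y: "0 < y" using assms(2) sdisc_pos[of l] by linarith
  have "- real l * c1 \<le> ln y" "ln y < (1 - real l) * c1"
    using assms y by (simp_all add: sdisc_le_iff_ln less_sdisc_iff_ln of_nat_diff algebra_simps)
  then have "- real l \<le> ln y / c1" "ln y / c1 < 1 - real l"
    by (simp_all add: pos_le_divide_eq[OF c1_pos] pos_divide_less_eq[OF c1_pos])
  then have "\<lfloor>ln y / c1\<rfloor> = - int l" by (intro floor_unique) auto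
  then have "M1 c1 C0 y = C0 * 2 powr (- real l - ln y / c1)"
    by (simp add: M1_def frac_def algebra_simps)
  then show ?thesis using y assms(4) by (simp add: f_eq branch_def)
qed

lemma branch_at_sdisc: "branch l (s l) = f_upper (s l)"
  using c1_pos by (simp add: branch_def f_upper_def ln_sdisc)

lemma branch_at_sdisc_pred: "1 \<le> l \<Longrightarrow> branch l (s (l - 1)) = f_lower (s (l - 1))"
  using c1_pos by (simp add: branch_def f_lower_def ln_sdisc of_nat_diff powr_minus_divide)

lemma continuous_on_branch: "continuous_on {0<..} (branch l)"
  unfolding branch_def using c1_pos by (intro continuous_intros) auto

lemma branch_eq_powr:
  assumes "0 < y"
  shows "branch l y = y + C0 * 2 powr (- real l) * y powr (1 + \<alpha> - ln 2 / c1)"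
proof -
  have "(- real l - ln y / c1) * ln 2 + (1 + \<alpha>) * ln y = - real l * ln 2 + (1 + \<alpha> - ln 2 / c1) * ln y"
    by (simp add: algebra_simps)
  then show ?thesis
    using assms by (simp add: branch_def powr_def mult.assoc exp_add[symmetric])
qed

text \<open>Each branch is either increasing or convex, so it cannot return to a value it took
  further left without exceeding it in between.\<close>
lemma branch_level_set_le:
  assumes "0 < t" "t \<le> y1" "y1 < y2" "branch l y1 = branch l y2"
  shows "branch l y1 \<le> branch l t"
proof -
  define q where "q = 1 + \<alpha> - ln 2 / c1"
  define C where "C = C0 * 2 powr (- real l)"
  have C: "0 < C" using C0_pos by (simp add: C_def)
  have pos: "0 < y1" "0 < y2" using assms by auto
  have F: "branch l y = y + C * y powr q" if "0 < y" for y
    using branch_eq_powr[OF that] by (simp add: C_def q_def)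
  have "C * (y1 powr q - y2 powr q) = y2 - y1"
    using assms(4) F[OF pos(1)] F[OF pos(2)] by (simp add: algebra_simps)
  then have "0 < C * (y1 powr q - y2 powr q)" using assms(3) by simp
  then have "y2 powr q < y1 powr q" using C by (simp add: zero_less_mult_iff)
  then have "q < 0" using powr_mono2[of q y1 y2] pos assms(3) by (cases "q < 0") auto
  then have "convex_on {0<..} (\<lambda>y. y + C * y powr q)"
    using C convex_on_powr_nonpos[of q]
    by (intro convex_on_add convex_on_cmul) (auto simp: convex_on_ident)
  then have "convex_on {t..y2} (\<lambda>y. y + C * y powr q)"
    by (rule convex_on_subset) (use assms in auto)
  from convex_on_equal_values_le_left[OF this assms(2,3)]
  show ?thesis using assms F[OF pos(1)] F[OF pos(2)] by (simp add: F)
qed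

text \<open>The gap \<open>[f(s\<^sub>l\<^sup>-), f(s\<^sub>l\<^sup>+)]\<close> that the jump of \<open>f\<close> at \<open>s l\<close> leaves in its image.\<close>
definition in_gap :: "real \<Rightarrow> bool" where
  "in_gap x \<longleftrightarrow> (\<exists>l\<ge>1. f_lower (s l) \<le> x \<and> x \<le> f_upper (s l))"

lemma f_preimage_unique:
  assumes no_gap: "\<not> in_gap x"
    and y: "0 < y1" "y1 < y2" "y2 \<le> 1/2" "f y1 = x" "f y2 = x"
  shows False
proof -
  obtain l1 where l1: "1 \<le> l1" "s l1 \<le> y1" "y1 < s (l1 - 1)"
    using sdisc_interval[of y1] y by auto
  obtain l2 where l2: "1 \<le> l2" "s l2 \<le> y2" "y2 < s (l2 - 1)"
    using sdisc_interval[of y2] y by auto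
  have "l2 \<le> l1"
  proof (rule ccontr)
    assume "\<not> l2 \<le> l1"
    then have "s (l2 - 1) \<le> s l1" by (simp add: sdisc_le_iff)
    then show False using l1(2) l2(3) y(2) by linarith
  qed
  have "x \<le> f_upper (s l2)"
  proof (cases "l2 < l1")
    case True
    then have "s (l1 - 1) \<le> s l2" by (simp add: sdisc_le_iff)
    then have "y1 < s l2" using l1(3) by linarith
    then show ?thesis
      using f_le_f_upper[of y1] f_upper_strict_mono[of y1 "s l2"] y by auto
  next
    case False
    then have "l1 = l2" using \<open>l2 \<le> l1\<close> by simp
    then have x: "x = branch l2 y1" "x = branch l2 y2"
      using f_eq_branch l1 l2 y by auto
    have "branch l2 y1 \<le> branch l2 (s l2)"
      by (rule branch_level_set_le[OF sdisc_pos _ y(2)]) (use l1(2) \<open>l1 = l2\<close> x in auto)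
    then show ?thesis using x(1) by (simp add: branch_at_sdisc)
  qed
  moreover have "f_lower (s l2) \<le> x"
    using f_lower_mono[OF sdisc_pos l2(2)] f_lower_less_f[of y2] y by auto
  ultimately show False using no_gap l2(1) by (auto simp: in_gap_def)
qed

lemma f_preimage_exists:
  assumes x: "0 < x" "x \<le> 1/2" and no_gap: "\<not> in_gap x"
  obtains y where "0 < y" "y < x" "f y = x"
proof -
  obtain l0 where l0: "1 \<le> l0" "s l0 < x / (1 + C0)"
    using ex_sdisc_less[of "x / (1 + C0)"] x C0_pos by auto
  then have "f_upper (s l0) < x"
    using f_upper_le[OF sdisc_pos, of l0] sdisc_le_iff[of l0 0] C0_pos
    by (simp add: pos_less_divide_eq mult.commute)
  then have ex: "\<exists>l. 1 \<le> l \<and> f_upper (s l) < x" using l0 by blast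
  define L where "L = (LEAST l. 1 \<le> l \<and> f_upper (s l) < x)"
  have L: "1 \<le> L" "f_upper (s L) < x" using LeastI_ex[OF ex] by (auto simp: L_def)
  have above: "x < f_lower (s (L - 1))" if "2 \<le> L"
  proof -
    have "\<not> f_upper (s (L - 1)) < x"
      using not_less_Least[of "L - 1" "\<lambda>l. 1 \<le> l \<and> f_upper (s l) < x"] that by (auto simp: L_def)
    moreover have "1 \<le> L - 1" using that by simp
    ultimately show ?thesis using no_gap unfolding in_gap_def by (meson not_less)
  qed
  define b where "b = min (s (L - 1)) (1/2)"
  have "s L < x" using less_f_upper[OF sdisc_pos, of L] L(2) by simp
  then have "s L < b" using x sdisc_less_iff[of L "L - 1"] L(1) by (simp add: b_def)
  have "branch L (s L) \<le> x" using L(2) by (simp add: branch_at_sdisc)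
  moreover have "x \<le> branch L b"
  proof (cases "b = 1/2")
    case True
    then show ?thesis using less_branch[of b L] x by simp
  next
    case False
    then have b: "b = s (L - 1)" "s (L - 1) < 1/2" by (auto simp: b_def)
    then have "L \<noteq> 1" by auto
    then have "2 \<le> L" using L(1) by simp
    then show ?thesis using above b branch_at_sdisc_pred[OF L(1)] by simp
  qed
  moreover have "continuous_on {s L..b} (branch L)"
    by (rule continuous_on_subset[OF continuous_on_branch]) (use sdisc_pos[of L] in auto)
  ultimately have "\<exists>y\<ge>s L. y \<le> b \<and> branch L y = x"
    using \<open>s L < b\<close> by (intro IVT') simp_all
  then obtain y where y: "s L \<le> y" "y \<le> b" "branch L y = x" by blast
  have "y < s (L - 1)"
  proof (cases "L = 1")
    case True
    then show ?thesis using y(2) by (simp add: b_def)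
  next
    case False
    have "y \<noteq> s (L - 1)"
    proof
      assume "y = s (L - 1)"
      then have "x = f_lower (s (L - 1))" using y(3) branch_at_sdisc_pred[OF L(1)] by simp
      then show False using above False L(1) by simp
    qed
    then show ?thesis using y(2) by (simp add: b_def)
  qed
  then have "f y = x" using f_eq_branch[OF L(1) y(1)] y by (simp add: b_def)
  moreover have "0 < y" using y(1) sdisc_pos[of L] by linarith
  ultimately show ?thesis using that less_branch[of y L] y(3) by simp
qed

lemma xstep_in_gap:
  assumes "in_gap x"
  obtains l where "1 \<le> l" "xstep \<alpha> c1 C0 x = s l" "f_lower (s l) \<le> x" "x \<le> f_upper (s l)"
proof -
  define P where "P l \<longleftrightarrow> 1 \<le> l \<and> f_lower (s l) \<le> x \<and> x \<le> f_upper (s l)" for l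
  have "\<exists>l. P l" using assms by (auto simp: in_gap_def P_def)
  then have "P (SOME l. P l)" by (rule someI_ex)
  moreover have "xstep \<alpha> c1 C0 x = s (SOME l. P l)"
    using assms by (simp add: xstep_def in_gap_def P_def)
  ultimately show thesis unfolding P_def by (blast intro: that)
qed

lemma xstep_not_in_gap:
  assumes x: "0 < x" "x \<le> 1/2" and no_gap: "\<not> in_gap x"
  shows "0 < xstep \<alpha> c1 C0 x \<and> xstep \<alpha> c1 C0 x < x \<and> f (xstep \<alpha> c1 C0 x) = x"
proof -
  have "\<exists>!y. 0 < y \<and> y < x \<and> f y = x"
  proof (rule ex_ex1I)
    show "\<exists>y. 0 < y \<and> y < x \<and> f y = x" using f_preimage_exists[OF x no_gap] by blast
    show "y1 = y2" if "0 < y1 \<and> y1 < x \<and> f y1 = x" "0 < y2 \<and> y2 < x \<and> f y2 = x" for y1 y2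
      using f_preimage_unique[OF no_gap, of y1 y2] f_preimage_unique[OF no_gap, of y2 y1] that x
      by (cases y1 y2 rule: linorder_cases) auto
  qed
  moreover have "\<not> (\<exists>l\<ge>1. fminus \<alpha> c1 C0 l \<le> x \<and> x \<le> fplus \<alpha> c1 C0 l)"
    using no_gap by (simp add: in_gap_def)
  then have "xstep \<alpha> c1 C0 x = (THE y. 0 < y \<and> y < x \<and> f y = x)"
    unfolding xstep_def by (rule if_not_P)
  ultimately show ?thesis using theI'[of "\<lambda>y. 0 < y \<and> y < x \<and> f y = x"] by simp
qed

lemma xstep_bounds:
  assumes "0 < x" "x \<le> 1/2"
  defines "y \<equiv> xstep \<alpha> c1 C0 x"
  shows "0 < y" "f_lower y \<le> x" "x \<le> f_upper y" "x \<noteq> f y \<Longrightarrow> \<exists>l\<ge>1. y = s l"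
proof -
  have "0 < y \<and> f_lower y \<le> x \<and> x \<le> f_upper y \<and> (x \<noteq> f y \<longrightarrow> (\<exists>l\<ge>1. y = s l))"
  proof (cases "in_gap x")
    case True
    then show ?thesis by (elim xstep_in_gap) (auto simp: y_def sdisc_pos)
  next
    case False
    then have "0 < y" "y < x" "f y = x" using xstep_not_in_gap[OF assms(1,2)] by (auto simp: y_def)
    then show ?thesis using f_lower_less_f[of y] f_le_f_upper[of y] assms by auto
  qed
  then show "0 < y" "f_lower y \<le> x" "x \<le> f_upper y" "x \<noteq> f y \<Longrightarrow> \<exists>l\<ge>1. y = s l" by blast+
qed

abbreviation xs :: "nat \<Rightarrow> real" where "xs \<equiv> xseq \<alpha> c1 C0"

lemma xs_pos_le_half: "0 < xs n \<and> xs n \<le> 1/2"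
proof (induction n)
  case (Suc n)
  then show ?case
    using xstep_bounds(1,2)[of "xs n"] less_f_lower[of "xs (Suc n)"] by auto
qed simp

lemma xs_pos: "0 < xs n" and xs_le_half: "xs n \<le> 1/2"
  using xs_pos_le_half by auto

lemma xs_step_bounds:
  "f_lower (xs (Suc n)) \<le> xs n" "xs n \<le> f_upper (xs (Suc n))"
  "xs n \<noteq> f (xs (Suc n)) \<Longrightarrow> \<exists>l\<ge>1. xs (Suc n) = s l"
  using xstep_bounds[OF xs_pos xs_le_half, of n] by simp_all

lemma xs_less_iff: "xs n < xs m \<longleftrightarrow> m < n"
proof -
  have "xs (Suc k) < xs k" for k
    using xs_step_bounds(1)[of k] less_f_lower[OF xs_pos, of "Suc k"] by simp
  then show ?thesis using lift_Suc_mono_less_iff[of "\<lambda>k. - xs k" m n] by simp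
qed

lemma xs_le_iff: "xs n \<le> xs m \<longleftrightarrow> m \<le> n"
  using xs_less_iff[of m n] by linarith

definition step_coeff :: "nat \<Rightarrow> real" where
  "step_coeff n = (xs n - xs (Suc n)) / xs (Suc n) powr (1 + \<alpha>)"

lemma xs_eq_step_coeff: "xs n = xs (Suc n) + step_coeff n * xs (Suc n) powr (1 + \<alpha>)"
  using xs_pos[of "Suc n"] by (simp add: step_coeff_def)

lemma step_coeff_bounds: "C0 / 2 \<le> step_coeff n" "step_coeff n \<le> C0"
  using xs_step_bounds(1,2)[of n] xs_pos[of "Suc n"]
  by (simp_all add: step_coeff_def f_lower_def f_upper_def pos_le_divide_eq pos_divide_le_eq)

lemma step_coeff_eq_M1:
  assumes "xs n = f (xs (Suc n))"
  shows "step_coeff n = M1 c1 C0 (xs (Suc n))"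
proof -
  have "xs n - xs (Suc n) = M1 c1 C0 (xs (Suc n)) * xs (Suc n) powr (1 + \<alpha>)"
    using assms f_eq[OF xs_pos xs_le_half, of "Suc n"] by simp
  then show ?thesis using xs_pos[of "Suc n"] by (simp add: step_coeff_def)
qed

text \<open>The steps at which the construction took the gap branch and set \<open>xs (Suc j)\<close> to a
  discontinuity point.\<close>
definition jumps :: "nat \<Rightarrow> nat set" where
  "jumps n = {j. j < n \<and> xs j \<noteq> f (xs (Suc j))}"

text \<open>Distinct jumps land on distinct discontinuities \<open>s l \<ge> xs n\<close>.\<close>
lemma card_jumps_le: "real (card (jumps n)) \<le> - ln (xs n) / c1"
proof -
  define N where "N = nat \<lfloor>- ln (xs n) / c1\<rfloor>"
  have "(\<lambda>j. xs (Suc j)) ` jumps n \<subseteq> s ` {1..N}"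
  proof
    fix y assume "y \<in> (\<lambda>j. xs (Suc j)) ` jumps n"
    then obtain j where j: "j < n" "xs j \<noteq> f (xs (Suc j))" "y = xs (Suc j)"
      by (auto simp: jumps_def)
    then obtain l where l: "1 \<le> l" "xs (Suc j) = s l" using xs_step_bounds(3) by blast
    have "xs n \<le> s l" using j(1) l(2) xs_le_iff[of n "Suc j"] by simp
    then have "real l * c1 \<le> - ln (xs n)"
      using ln_le_cancel_iff[OF xs_pos sdisc_pos, of n l] by (simp add: ln_sdisc)
    then have "real l \<le> - ln (xs n) / c1" by (rule iffD2[OF pos_le_divide_eq[OF c1_pos]])
    then have "l \<le> N" by (simp add: N_def le_nat_floor)
    then show "y \<in> s ` {1..N}" using l j(3) by auto
  qed
  moreover have "inj_on (\<lambda>j. xs (Suc j)) (jumps n)"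
    by (rule inj_onI) (metis xs_less_iff less_irrefl linorder_neq_iff Suc_inject)
  ultimately have "card (jumps n) \<le> card (s ` {1..N})"
    by (metis card_image card_mono finite_imageI finite_atLeastAtMost)
  also have "\<dots> \<le> N" using card_image_le[of "{1..N}" s] by simp
  finally have "real (card (jumps n)) \<le> real N" by simp
  also have "\<dots> \<le> - ln (xs n) / c1"
  proof -
    have "0 \<le> - ln (xs n)" using xs_pos[of n] xs_le_half[of n] by simp
    then show ?thesis unfolding N_def using c1_pos by (intro of_nat_floor divide_nonneg_pos)
  qed
  finally show ?thesis .
qed

definition ys :: "nat \<Rightarrow> real" where
  "ys n = xs n powr (- \<alpha>)"

lemma ys_pos: "0 < ys n"
  using xs_pos[of n] by (simp add: ys_def)

lemma ln_ys: "ln (ys n) = - \<alpha> * ln (xs n)"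
  using xs_pos[of n] by (simp add: ys_def ln_powr)

lemma xs_eq_ys_powr: "xs n = ys n powr (- (1 / \<alpha>))"
  using xs_pos[of n] alpha_pos by (simp add: ys_def powr_powr)

lemma one_le_ys: "1 \<le> ys n"
proof -
  have "xs n powr \<alpha> \<le> 1"
    using xs_pos[of n] xs_le_half[of n] alpha_pos by (intro powr_le1) auto
  then show ?thesis using xs_pos[of n] by (simp add: ys_def powr_minus_divide)
qed

lemma ys_increment_eq:
  "ys (Suc n) - ys n = ys (Suc n) * (1 - (1 + step_coeff n / ys (Suc n)) powr (- \<alpha>))"
proof -
  define x where "x = xs (Suc n)"
  define t where "t = step_coeff n / ys (Suc n)"
  have x: "0 < x" unfolding x_def by (rule xs_pos)
  have t: "0 \<le> t" using step_coeff_bounds(1)[of n] C0_pos ys_pos[of "Suc n"] by (simp add: t_def)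
  have "t = step_coeff n * x powr \<alpha>" using x by (simp add: t_def ys_def x_def powr_minus_divide)
  moreover have "xs n = x + step_coeff n * x powr (1 + \<alpha>)"
    unfolding x_def by (rule xs_eq_step_coeff)
  ultimately have "xs n = x * (1 + t)" using x by (simp add: powr_add algebra_simps)
  then have "ys n = (x * (1 + t)) powr (- \<alpha>)" by (simp add: ys_def)
  also have "\<dots> = ys (Suc n) * (1 + t) powr (- \<alpha>)"
    using x t by (simp add: powr_mult ys_def x_def)
  finally show ?thesis by (simp add: t_def algebra_simps)
qed

lemma ys_increment_bounds:
  fixes n :: nat
  defines "t \<equiv> step_coeff n / ys (Suc n)"
  shows "\<alpha> * step_coeff n / (1 + (1 + \<alpha>) * t) \<le> ys (Suc n) - ys n"
    and "ys (Suc n) - ys n \<le> \<alpha> * step_coeff n"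
proof -
  have Y: "0 < ys (Suc n)" by (rule ys_pos)
  have t: "0 \<le> t" using step_coeff_bounds(1)[of n] C0_pos Y by (simp add: t_def)
  have Yt: "ys (Suc n) * t = step_coeff n" using Y by (simp add: t_def)
  note bounds = one_minus_powr_neg_bounds[OF alpha_pos t]
  have "\<alpha> * step_coeff n / (1 + (1 + \<alpha>) * t) = ys (Suc n) * (\<alpha> * t / (1 + (1 + \<alpha>) * t))"
    using Yt by (simp add: algebra_simps)
  also have "\<dots> \<le> ys (Suc n) * (1 - (1 + t) powr (- \<alpha>))"
    using bounds(1) Y by (intro mult_left_mono) auto
  finally show "\<alpha> * step_coeff n / (1 + (1 + \<alpha>) * t) \<le> ys (Suc n) - ys n"
    by (simp add: ys_increment_eq t_def)
  have "ys (Suc n) * (1 - (1 + t) powr (- \<alpha>)) \<le> ys (Suc n) * (\<alpha> * t)"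
    using bounds(2) Y by (intro mult_left_mono) auto
  also have "\<dots> = \<alpha> * step_coeff n" using Yt by (simp add: algebra_simps)
  finally show "ys (Suc n) - ys n \<le> \<alpha> * step_coeff n"
    by (simp add: ys_increment_eq t_def)
qed

definition \<delta> :: real where
  "\<delta> = \<alpha> * (C0 / 2) / (1 + (1 + \<alpha>) * C0)"

lemma \<delta>_pos: "0 < \<delta>"
  unfolding \<delta>_def using alpha_pos C0_pos by (intro divide_pos_pos mult_pos_pos add_pos_pos) auto

lemma \<delta>_le_ys_increment: "\<delta> \<le> ys (Suc n) - ys n"
proof -
  define t where "t = step_coeff n / ys (Suc n)"
  have "step_coeff n / ys (Suc n) \<le> step_coeff n / 1"
    using step_coeff_bounds(1)[of n] one_le_ys[of "Suc n"] C0_pos by (intro divide_left_mono) auto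
  then have "t \<le> C0" using step_coeff_bounds(2)[of n] by (simp add: t_def)
  have "\<delta> \<le> \<alpha> * step_coeff n / (1 + (1 + \<alpha>) * t)"
    unfolding \<delta>_def
  proof (rule frac_le)
    show "0 \<le> \<alpha> * step_coeff n" "\<alpha> * (C0 / 2) \<le> \<alpha> * step_coeff n"
      using alpha_pos step_coeff_bounds(1)[of n] C0_pos by simp_all
    show "0 < 1 + (1 + \<alpha>) * t"
      using alpha_pos step_coeff_bounds(1)[of n] C0_pos ys_pos[of "Suc n"]
      by (simp add: t_def add_pos_nonneg)
    show "1 + (1 + \<alpha>) * t \<le> 1 + (1 + \<alpha>) * C0" using alpha_pos \<open>t \<le> C0\<close> by simp
  qed
  with ys_increment_bounds(1)[of n] show ?thesis by (simp add: t_def)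
qed

lemma ys_increment_le: "ys (Suc n) - ys n \<le> \<alpha> * C0"
  using ys_increment_bounds(2)[of n] step_coeff_bounds(2)[of n] alpha_pos
  by (meson mult_left_mono order_trans less_imp_le)

lemma ys_increment_error:
  "\<bar>ys (Suc n) - ys n - \<alpha> * step_coeff n\<bar> \<le> \<alpha> * (1 + \<alpha>) * C0\<^sup>2 / ys (Suc n)"
proof -
  define m where "m = step_coeff n"
  define W where "W = (1 + \<alpha>) * (m / ys (Suc n))"
  have m: "0 \<le> m" "m \<le> C0" using step_coeff_bounds[of n] C0_pos by (simp_all add: m_def)
  have W: "0 \<le> W" using alpha_pos m ys_pos[of "Suc n"] by (simp add: W_def)
  have "(\<alpha> * m - \<alpha> * m * W) * (1 + W) = \<alpha> * m - \<alpha> * m * W\<^sup>2"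
    by (simp add: algebra_simps power2_eq_square)
  also have "\<dots> \<le> \<alpha> * m" using alpha_pos m by simp
  finally have "\<alpha> * m - \<alpha> * m * W \<le> \<alpha> * m / (1 + W)"
    using W by (simp add: pos_le_divide_eq)
  then have "\<alpha> * m - (ys (Suc n) - ys n) \<le> \<alpha> * (1 + \<alpha>) * m\<^sup>2 / ys (Suc n)"
    using ys_increment_bounds(1)[of n] by (simp add: W_def m_def power2_eq_square algebra_simps)
  also have "\<dots> \<le> \<alpha> * (1 + \<alpha>) * C0\<^sup>2 / ys (Suc n)"
    using m alpha_pos ys_pos[of "Suc n"]
    by (intro divide_right_mono mult_left_mono power_mono) auto
  finally show ?thesis using ys_increment_bounds(2)[of n] by (simp add: m_def)
qed

lemma ys_lower: "\<delta> * real n \<le> ys n"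
proof (induction n)
  case 0
  then show ?case using ys_pos[of 0] by simp
next
  case (Suc n)
  then show ?case using \<delta>_le_ys_increment[of n] by (simp add: algebra_simps)
qed

lemma ys_upper: "ys n \<le> ys 0 + \<alpha> * C0 * real n"
proof (induction n)
  case (Suc n)
  then show ?case using ys_increment_le[of n] by (simp add: algebra_simps)
qed simp

lemma ln_ys_le: "1 \<le> n \<Longrightarrow> ln (ys n) \<le> ln (ys 0 + \<alpha> * C0) + ln (real n)"
proof -
  assume n: "1 \<le> n"
  have "ys 0 * 1 \<le> ys 0 * real n" using n ys_pos[of 0] by (intro mult_left_mono) auto
  then have "ys n \<le> (ys 0 + \<alpha> * C0) * real n" using ys_upper[of n] by (simp add: algebra_simps)
  then have "ln (ys n) \<le> ln ((ys 0 + \<alpha> * C0) * real n)" using ys_pos[of n] by (rule ln_mono)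
  also have "\<dots> = ln (ys 0 + \<alpha> * C0) + ln (real n)"
    using n ys_pos[of 0] mult_pos_pos[OF alpha_pos C0_pos] by (intro ln_mult_pos) auto
  finally show ?thesis .
qed

lemma sum_increment_error_le:
  assumes "1 \<le> n"
  shows "\<bar>\<Sum>j<n. ys (Suc j) - ys j - \<alpha> * step_coeff j\<bar> \<le> \<alpha> * (1 + \<alpha>) * C0\<^sup>2 / \<delta> * (1 + ln (real n))"
proof -
  define A where "A = \<alpha> * (1 + \<alpha>) * C0\<^sup>2"
  have A: "0 \<le> A" using alpha_pos by (simp add: A_def)
  have "\<bar>\<Sum>j<n. ys (Suc j) - ys j - \<alpha> * step_coeff j\<bar> \<le> (\<Sum>j<n. A / \<delta> * inverse (real (Suc j)))"
  proof (rule order_trans[OF sum_abs sum_mono])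
    fix j
    have "\<bar>ys (Suc j) - ys j - \<alpha> * step_coeff j\<bar> \<le> A / ys (Suc j)"
      using ys_increment_error[of j] by (simp add: A_def)
    also have "\<dots> \<le> A / (\<delta> * real (Suc j))"
      using ys_lower[of "Suc j"] ys_pos[of "Suc j"] \<delta>_pos A by (intro divide_left_mono mult_pos_pos) auto
    finally show "\<bar>ys (Suc j) - ys j - \<alpha> * step_coeff j\<bar> \<le> A / \<delta> * inverse (real (Suc j))"
      by (simp add: field_simps)
  qed
  also have "\<dots> = A / \<delta> * harm n" by (simp add: harm_altdef sum_distrib_left)
  also have "\<dots> \<le> A / \<delta> * (1 + ln (real n))"
    using harm_le_one_plus_ln[OF assms] A \<delta>_pos by (intro mult_left_mono) auto
  finally show ?thesis by (simp add: A_def)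
qed

lemma sum_jump_error_le:
  "\<bar>\<Sum>j<n. step_coeff j - M1 c1 C0 (xs (Suc j))\<bar> \<le> C0 / 2 * real (card (jumps n))"
proof -
  have "(\<Sum>j<n. step_coeff j - M1 c1 C0 (xs (Suc j))) = (\<Sum>j\<in>jumps n. step_coeff j - M1 c1 C0 (xs (Suc j)))"
    by (rule sum.mono_neutral_right) (auto simp: jumps_def step_coeff_eq_M1)
  also have "\<bar>\<dots>\<bar> \<le> (\<Sum>j\<in>jumps n. C0 / 2)"
  proof (rule order_trans[OF sum_abs sum_mono])
    fix j
    show "\<bar>step_coeff j - M1 c1 C0 (xs (Suc j))\<bar> \<le> C0 / 2"
      using step_coeff_bounds[of j] M1_bounds[OF C0_pos, of c1 "xs (Suc j)"] unfolding abs_le_iff by linarith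
  qed
  finally show ?thesis by (simp add: mult.commute)
qed

lemma jump_error_le:
  assumes "1 \<le> n"
  shows "\<alpha> * \<bar>\<Sum>j<n. step_coeff j - M1 c1 C0 (xs (Suc j))\<bar>
    \<le> C0 / (2 * c1) * (ln (ys 0 + \<alpha> * C0) + ln (real n))"
proof -
  have "\<alpha> * \<bar>\<Sum>j<n. step_coeff j - M1 c1 C0 (xs (Suc j))\<bar> \<le> \<alpha> * (C0 / 2 * real (card (jumps n)))"
    using sum_jump_error_le alpha_pos by (intro mult_left_mono) auto
  also have "\<dots> \<le> \<alpha> * (C0 / 2 * (- ln (xs n) / c1))"
    using card_jumps_le alpha_pos C0_pos by (intro mult_left_mono) auto
  also have "\<dots> = C0 / (2 * c1) * ln (ys n)"
    using alpha_pos by (simp add: ln_ys)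
  also have "\<dots> \<le> C0 / (2 * c1) * (ln (ys 0 + \<alpha> * C0) + ln (real n))"
    using ln_ys_le[OF assms] C0_pos c1_pos by (intro mult_left_mono) auto
  finally show ?thesis .
qed

lemma ys_minus_sum_M1_eq:
  "ys n - \<alpha> * (\<Sum>j<n. M1 c1 C0 (xs (Suc j)))
    = ys 0 + (\<Sum>j<n. ys (Suc j) - ys j - \<alpha> * step_coeff j)
      + \<alpha> * (\<Sum>j<n. step_coeff j - M1 c1 C0 (xs (Suc j)))"
  using sum_lessThan_telescope[of ys n]
  by (simp add: sum_subtractf sum.distrib sum_distrib_left algebra_simps)

lemma ys_minus_sum_M1_le:
  obtains B where
    "\<And>n. 1 \<le> n \<Longrightarrow> \<bar>ys n - \<alpha> * (\<Sum>j<n. M1 c1 C0 (xs (Suc j)))\<bar> \<le> B * (1 + ln (real n))"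
proof -
  define A where "A = \<alpha> * (1 + \<alpha>) * C0\<^sup>2 / \<delta>"
  define Y where "Y = ln (ys 0 + \<alpha> * C0)"
  have "0 \<le> Y"
    using one_le_ys[of 0] mult_pos_pos[OF alpha_pos C0_pos] by (simp add: Y_def)
  show thesis
  proof (rule that[of "ys 0 + A + C0 / (2 * c1) * (Y + 1)"])
    fix n :: nat
    assume n: "1 \<le> n"
    define D where "D = (\<Sum>j<n. ys (Suc j) - ys j - \<alpha> * step_coeff j)"
    define J where "J = (\<Sum>j<n. step_coeff j - M1 c1 C0 (xs (Suc j)))"
    have "ys n - \<alpha> * (\<Sum>j<n. M1 c1 C0 (xs (Suc j))) = ys 0 + D + \<alpha> * J"
      unfolding D_def J_def by (rule ys_minus_sum_M1_eq)
    then have "\<bar>ys n - \<alpha> * (\<Sum>j<n. M1 c1 C0 (xs (Suc j)))\<bar> = \<bar>ys 0 + D + \<alpha> * J\<bar>" by simp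
    also have "\<dots> \<le> ys 0 + \<bar>D\<bar> + \<alpha> * \<bar>J\<bar>"
      using abs_triangle_ineq[of "ys 0 + D" "\<alpha> * J"] abs_triangle_ineq[of "ys 0" D]
        abs_of_pos[OF ys_pos, of 0] abs_mult[of \<alpha> J] abs_of_pos[OF alpha_pos]
      by linarith
    also have "\<dots> \<le> ys 0 * (1 + ln (real n)) + A * (1 + ln (real n))
        + C0 / (2 * c1) * (Y + 1) * (1 + ln (real n))"
    proof -
      have ln_n: "0 \<le> ln (real n)" using n by simp
      have "ys 0 \<le> ys 0 * (1 + ln (real n))" using ln_n ys_pos[of 0] by simp
      moreover have "\<bar>D\<bar> \<le> A * (1 + ln (real n))"
        unfolding D_def A_def by (rule sum_increment_error_le[OF n])
      moreover have "Y + ln (real n) \<le> (Y + 1) * (1 + ln (real n))"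
        using \<open>0 \<le> Y\<close> ln_n by (simp add: algebra_simps)
      then have "\<alpha> * \<bar>J\<bar> \<le> C0 / (2 * c1) * (Y + 1) * (1 + ln (real n))"
        using jump_error_le[OF n] C0_pos c1_pos mult_left_mono[of _ _ "C0 / (2 * c1)"]
        by (fastforce simp: J_def Y_def mult.assoc)
      ultimately show ?thesis by linarith
    qed
    finally show "\<bar>ys n - \<alpha> * (\<Sum>j<n. M1 c1 C0 (xs (Suc j)))\<bar>
        \<le> (ys 0 + A + C0 / (2 * c1) * (Y + 1)) * (1 + ln (real n))"
      by (simp add: algebra_simps)
  qed
qed

lemma M0_eq: "1 \<le> n \<Longrightarrow> M0 \<alpha> c1 C0 n * real n = (\<Sum>j<n. M1 c1 C0 (xs (Suc j)))"
  unfolding M0_def using sum.atLeast1_atMost_eq[of "\<lambda>j. M1 c1 C0 (xs j)" n] by simp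

lemma one_le_ln: "3 \<le> n \<Longrightarrow> 1 \<le> ln (real n)"
  using exp_le order_trans[of "exp 1" 3 "real n"] by (simp add: ln_ge_iff)

lemma xs_minus_M0_le:
  fixes n :: nat
  assumes n: "1 \<le> n"
  defines "c \<equiv> min \<delta> (\<alpha> * C0 / 2)"
  shows "\<bar>xs n - 1 / (\<alpha> * M0 \<alpha> c1 C0 n * real n) powr (1 / \<alpha>)\<bar>
    \<le> 1 / \<alpha> * c powr (- (1 / \<alpha>) - 1) / real n powr (1 + 1 / \<alpha>)
      * \<bar>ys n - \<alpha> * (\<Sum>j<n. M1 c1 C0 (xs (Suc j)))\<bar>"
proof -
  define S where "S = (\<Sum>j<n. M1 c1 C0 (xs (Suc j)))"
  have c: "0 < c" using \<delta>_pos alpha_pos C0_pos by (simp add: c_def)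
  have "c * real n \<le> ys n"
    using ys_lower[of n] mult_right_mono[of c \<delta> "real n"] by (simp add: c_def)
  moreover have "c * real n \<le> \<alpha> * S"
  proof -
    have "c \<le> \<alpha> * C0 / 2" by (simp add: c_def)
    then have "c * real n \<le> \<alpha> * C0 / 2 * real n" by (rule mult_right_mono) simp
    also have "\<dots> = \<alpha> * (\<Sum>j<n. C0 / 2)" by simp
    also have "\<dots> \<le> \<alpha> * S"
      unfolding S_def using M1_bounds(1)[OF C0_pos] alpha_pos
      by (intro mult_left_mono sum_mono) (auto simp: less_imp_le)
    finally show ?thesis .
  qed
  moreover have "0 < real n" using n by simp
  ultimately have "\<bar>ys n powr (- (1 / \<alpha>)) - (\<alpha> * S) powr (- (1 / \<alpha>))\<bar>
      \<le> 1 / \<alpha> * (c * real n) powr (- (1 / \<alpha>) - 1) * \<bar>ys n - \<alpha> * S\<bar>"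
    using c alpha_pos by (intro powr_neg_lipschitz) auto
  moreover have "(c * real n) powr (- (1 / \<alpha>) - 1) = c powr (- (1 / \<alpha>) - 1) / real n powr (1 + 1 / \<alpha>)"
  proof -
    have "- (1 / \<alpha>) - 1 = - (1 + 1 / \<alpha>)" by simp
    then have "real n powr (- (1 / \<alpha>) - 1) = 1 / real n powr (1 + 1 / \<alpha>)"
      by (simp only: powr_minus_divide)
    then show ?thesis using c by (simp add: powr_mult)
  qed
  moreover have "1 / (\<alpha> * M0 \<alpha> c1 C0 n * real n) powr (1 / \<alpha>) = (\<alpha> * S) powr (- (1 / \<alpha>))"
    using M0_eq[OF n] by (simp add: S_def mult.assoc powr_minus_divide)
  ultimately show ?thesis by (simp add: xs_eq_ys_powr[of n] S_def)
qed

lemma xs_minus_M0_bigo: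
  "(\<lambda>n. xs n - 1 / (\<alpha> * M0 \<alpha> c1 C0 n * real n) powr (1 / \<alpha>))
     \<in> O(\<lambda>n. ln (real n) / real n powr (1 + 1 / \<alpha>))"
proof -
  obtain B where B: "\<And>n. 1 \<le> n \<Longrightarrow>
      \<bar>ys n - \<alpha> * (\<Sum>j<n. M1 c1 C0 (xs (Suc j)))\<bar> \<le> B * (1 + ln (real n))"
    using ys_minus_sum_M1_le by blast
  have "0 \<le> B" using B[of 1] by simp
  define L where "L = 1 / \<alpha> * min \<delta> (\<alpha> * C0 / 2) powr (- (1 / \<alpha>) - 1)"
  have "0 \<le> L" using alpha_pos by (simp add: L_def)
  have "\<forall>\<^sub>F n in sequentially. norm (xs n - 1 / (\<alpha> * M0 \<alpha> c1 C0 n * real n) powr (1 / \<alpha>))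
      \<le> 2 * B * L * norm (ln (real n) / real n powr (1 + 1 / \<alpha>))"
  proof (rule eventually_sequentiallyI[of 3])
    fix n :: nat
    assume n: "3 \<le> n"
    have ln_n: "1 \<le> ln (real n)" using one_le_ln[OF n] .
    have "\<bar>xs n - 1 / (\<alpha> * M0 \<alpha> c1 C0 n * real n) powr (1 / \<alpha>)\<bar>
        \<le> L / real n powr (1 + 1 / \<alpha>) * \<bar>ys n - \<alpha> * (\<Sum>j<n. M1 c1 C0 (xs (Suc j)))\<bar>"
      using xs_minus_M0_le[of n] n by (simp add: L_def)
    also have "\<dots> \<le> L / real n powr (1 + 1 / \<alpha>) * (B * (1 + ln (real n)))"
      using B[of n] n \<open>0 \<le> L\<close> by (intro mult_left_mono) auto
    also have "\<dots> \<le> L / real n powr (1 + 1 / \<alpha>) * (B * (2 * ln (real n)))"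
      using ln_n \<open>0 \<le> B\<close> \<open>0 \<le> L\<close> by (intro mult_left_mono) auto
    finally show "norm (xs n - 1 / (\<alpha> * M0 \<alpha> c1 C0 n * real n) powr (1 / \<alpha>))
        \<le> 2 * B * L * norm (ln (real n) / real n powr (1 + 1 / \<alpha>))"
      using ln_n by (simp add: field_simps)
  qed
  then show ?thesis by (rule bigoI)
qed

end

theorem proposition4p1:
  fixes \<alpha> \<beta> c1 C0 :: real
  assumes "0 < \<alpha>" and "\<alpha> < 1" and "\<beta> = 1 / \<alpha>"
    and "0 < c1"
    and "(fM1 \<alpha> c1 C0 \<longlongrightarrow> 1) (at_left (1/2))"
  shows "(\<lambda>n. xseq \<alpha> c1 C0 n - 1 / (\<alpha> * M0 \<alpha> c1 C0 n * real n) powr \<beta>)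
           \<in> O(\<lambda>n. ln (real n) / real n powr (1 + \<beta>))"
proof -
  interpret fM1_map \<alpha> c1 C0
    using assms(1,4) pos_of_fM1_tendsto_1[OF assms(5)] by unfold_locales
  show ?thesis using xs_minus_M0_bigo by (simp add: assms(3))
qed

end
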